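(* Let $p$ be a prime and $k,\ell$ integers with $k>0$, $\ell\ge0$; put $q=p^k$ and $Q=p^{\ell}$. Let $\Gamma$ be the set of roots in $\mathbb{F}_{q^3}$ of $X^{q^2}+X^q+X$. Then the polynomial $(X^q-X)\circ X^{Q+1}=X^{q(Q+1)}-X^{Q+1}$ permutes $\Gamma$ (i.e. maps $\Gamma$ bijectively onto $\Gamma$) if and only if $\gcd(q-1,Q+1)=1$, or equivalently, if and only if $p=2$ and $\operatorname{ord}_2(k)\le\operatorname{ord}_2(\ell)$.
   Context: For a nonzero integer $N$, $\operatorname{ord}_2(N)$ is the largest integer $s\ge0$ with $2^s\mid N$, and $\operatorname{ord}_2(0)=\infty$. *)

theory Defs
  imports "HOL-Computational_Algebra.Primes" "HOL-Library.Extended_Nat"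
begin

definition ord2 :: "int \<Rightarrow> enat" where
  "ord2 N = (if N = 0 then \<infinity> else enat (multiplicity 2 N))"

end

theory Submission
  imports Defs "HOL-Library.Cardinality" "HOL-Number_Theory.Number_Theory"
    "HOL-Computational_Algebra.Polynomial"
begin

text \<open>Write \<open>K\<close> for the field with \<open>q\<^sup>3\<close> elements and \<open>F\<close> for its subfield of elements fixed by
  \<open>z \<mapsto> z\<^sup>q\<close>. Then \<open>\<Gamma>\<close> is the kernel of the trace \<open>x + x\<^sup>q + x\<^bsup>q\<^sup>2\<^esup>\<close> from \<open>K\<close> to \<open>F\<close>, and the
  map is \<open>u\<^sup>q - u\<close> with \<open>u = x\<^bsup>Q+1\<^esup>\<close>, so it sends \<open>K\<close> into \<open>\<Gamma>\<close>, and two points of \<open>\<Gamma>\<close> have the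
  same image iff \<open>x\<^bsup>Q+1\<^esup> - y\<^bsup>Q+1\<^esup> \<in> F\<close>.

  If \<open>d = gcd (q - 1) (Q + 1) > 1\<close>, a \<open>d\<close>-th root of unity \<open>\<zeta> \<noteq> 1\<close> lies in \<open>F\<close>, and
  \<open>x \<mapsto> \<zeta> x\<close> preserves the fibres of the map.

  If the gcd is \<open>1\<close>, then \<open>p = 2\<close> and \<open>ord\<^sub>2 k \<le> ord\<^sub>2 l\<close>, so \<open>z\<^bsup>2^(l m)\<^esup> = z\<close> on \<open>K\<close> for
  an odd \<open>m\<close>, which makes \<open>z \<mapsto> z\<^bsup>Q+1\<^esup>\<close> injective. Let \<open>x, y \<in> \<Gamma>\<close> with
  \<open>x\<^bsup>Q+1\<^esup> + y\<^bsup>Q+1\<^esup> \<in> F\<close>. If \<open>x, y\<close> are \<open>F\<close>-linearly dependent, injectivity of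
  \<open>z \<mapsto> z\<^bsup>Q+1\<^esup>\<close> forces \<open>x = y\<close>. Otherwise let \<open>M\<close> be the matrix with rows \<open>(x, y)\<close> and
  \<open>(x\<^sup>q, y\<^sup>q)\<close> and \<open>M'\<close> its entrywise \<open>Q\<close>-th power: \<open>H = M' M\<^sup>T\<close> has entries in \<open>F\<close> and
  determinant \<open>det(M)\<^bsup>Q+1\<^esup> \<noteq> 0\<close>, so the Frobenius \<open>z \<mapsto> z\<^bsup>Q\<^sup>2\<^esup>\<close>, and hence its odd power
  \<open>z \<mapsto> z\<^sup>Q\<close>, maps the rows of \<open>M\<close> into their \<open>F\<close>-span. Reading off \<open>H\<close> in these coordinates
  shows \<open>(x + y)\<^sup>2 = x\<^sup>2 + y\<^sup>2 \<in> F\<close>, so \<open>x + y \<in> F \<inter> \<Gamma> = {0}\<close>.\<close>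

lemma power_swap: "(x ^ m) ^ n = (x ^ n) ^ (m :: nat)" for x :: "'a::monoid_mult"
  by (simp flip: power_mult add: mult.commute)

lemma power_card_minus_one_eq_one:
  fixes x :: "'a::{field,finite}"
  assumes "x \<noteq> 0"
  shows "x ^ (CARD('a) - 1) = 1"
proof -
  define U where "U = UNIV - {0::'a}"
  have "bij_betw ((*) x) U U"
    by (rule bij_betwI[of _ _ _ "(*) (inverse x)"]) (use assms in \<open>auto simp: U_def\<close>)
  then have "(\<Prod>u\<in>U. x * u) = \<Prod>U"
    using prod.reindex_bij_betw[of "(*) x" U U id] by simp
  moreover have "(\<Prod>u\<in>U. x * u) = x ^ card U * \<Prod>U"
    by (simp add: prod.distrib)
  moreover have "\<Prod>U \<noteq> 0"
    by (simp add: U_def)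
  moreover have "card U = CARD('a) - 1"
    by (simp add: U_def card_Diff_singleton)
  ultimately show ?thesis
    by simp
qed

lemma power_card_eq_self:
  fixes x :: "'a::{field,finite}"
  shows "x ^ CARD('a) = x"
proof (cases "x = 0")
  case False
  have "x ^ CARD('a) = x * x ^ (CARD('a) - 1)"
    using finite_UNIV_card_ge_0[where 'a='a] by (simp flip: power_Suc)
  then show ?thesis
    using power_card_minus_one_eq_one[OF False] by simp
qed (simp add: finite_UNIV_card_ge_0)

lemma power_card_power_eq_self:
  fixes x :: "'a::{field,finite}"
  shows "x ^ (CARD('a) ^ n) = x"
  by (induction n) (simp_all add: power_card_eq_self power_mult)

lemma CHAR_eq_of_card:
  assumes "prime p" and "CARD('a::{field,finite}) = p ^ n"
  shows "CHAR('a) = p"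
proof -
  have prime: "prime CHAR('a)"
    by (simp add: finite_imp_CHAR_pos prime_CHAR_semidom)
  have "CHAR('a) dvd p ^ n"
    using CHAR_dvd_CARD[where 'a='a] assms(2) by simp
  then have "CHAR('a) dvd p"
    using prime prime_dvd_power by blast
  then show ?thesis
    using prime assms(1) primes_dvd_imp_eq by blast
qed

lemma card_roots_power_eq_le:
  fixes c :: "'a::field"
  assumes "n > 0"
  shows "card {x. x ^ n = c} \<le> n"
proof -
  define P where "P = monom (1::'a) n + [:- c:]"
  have "degree P = n"
    using assms by (simp add: P_def degree_add_eq_left degree_monom_eq)
  moreover have "{x. x ^ n = c} = {x. poly P x = 0}"
    by (simp add: P_def poly_monom)
  ultimately show ?thesis
    using card_poly_roots_bound[of P] assms by fastforce
qed

lemma exists_root_of_unity_ne_one: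
  assumes "2 \<le> d" and "d dvd CARD('a::{field,finite}) - 1"
  shows "\<exists>\<zeta>::'a. \<zeta> ^ d = 1 \<and> \<zeta> \<noteq> 1"
proof -
  define U where "U = UNIV - {0::'a}"
  define M where "M = (CARD('a) - 1) div d"
  have dM: "d * M = CARD('a) - 1"
    using assms(2) by (simp add: M_def)
  have card_U: "card U = d * M"
    by (simp add: U_def dM card_Diff_singleton)
  have "1 \<in> U"
    by (simp add: U_def)
  then have "card U > 0"
    by (auto simp: card_gt_0_iff)
  then have "0 < M" "M < card U"
    using assms(1) card_U by auto
  have "(w ^ d) ^ M = 1" if "w \<in> U" for w
    using that power_card_minus_one_eq_one[of w] by (simp add: U_def dM flip: power_mult)
  then have "card ((\<lambda>w. w ^ d) ` U) \<le> card {u::'a. u ^ M = 1}"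
    by (intro card_mono) auto
  also have "\<dots> \<le> M"
    using card_roots_power_eq_le \<open>0 < M\<close> by blast
  finally have "\<not> inj_on (\<lambda>w. w ^ d) U"
    using \<open>M < card U\<close> card_image by fastforce
  then obtain v w where "v \<in> U" "w \<in> U" "v \<noteq> w" "v ^ d = w ^ d"
    by (auto simp: inj_on_def)
  then show ?thesis
    by (intro exI[of _ "v / w"]) (auto simp: U_def power_divide)
qed

lemma exists_power_ne_self:
  assumes "1 < n" and "n < CARD('a::{field,finite})"
  shows "\<exists>w::'a. w ^ n \<noteq> w"
proof (rule ccontr)
  assume fixed: "\<nexists>w::'a. w ^ n \<noteq> w"
  have "w ^ (n - 1) = 1" if "w \<noteq> 0" for w :: 'a
  proof -
    have "w * w ^ (n - 1) = w * 1"
      using fixed assms(1) by (simp flip: power_Suc)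
    then show ?thesis
      using that by simp
  qed
  then have "UNIV \<subseteq> insert 0 {w::'a. w ^ (n - 1) = 1}"
    by auto
  then have "CARD('a) \<le> card (insert 0 {w::'a. w ^ (n - 1) = 1})"
    by (intro card_mono) auto
  also have "\<dots> \<le> Suc (card {w::'a. w ^ (n - 1) = 1})"
    by (simp add: card_insert_if)
  also have "\<dots> \<le> Suc (n - 1)"
    using card_roots_power_eq_le[of "n - 1" "1::'a"] assms(1) by simp
  finally show False
    using assms by simp
qed

lemma frobenius_diff:
  fixes x y :: "'a::comm_ring_1"
  assumes "prime CHAR('a)" and "m = CHAR('a) ^ n"
  shows "(x - y) ^ m = x ^ m - y ^ m"
proof -
  have "x ^ m = ((x - y) + y) ^ m"
    by simp
  also have "\<dots> = (x - y) ^ m + y ^ m"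
    using freshmans_dream'[OF assms] .
  finally show ?thesis
    by simp
qed

lemma linear_2x2_inj:
  fixes a b c d u v u' v' :: "'a::idom"
  assumes "u * a + v * b = u' * a + v' * b" and "u * c + v * d = u' * c + v' * d"
    and "a * d - b * c \<noteq> 0"
  shows "u = u'" and "v = v'"
proof -
  define s t where "s = u - u'" and "t = v - v'"
  have "s * a + t * b = 0" and "s * c + t * d = 0"
    using assms(1,2) by (simp_all add: s_def t_def algebra_simps)
  moreover have "s * (a * d - b * c) = d * (s * a + t * b) - b * (s * c + t * d)"
    and "t * (a * d - b * c) = a * (s * c + t * d) - c * (s * a + t * b)"
    by (simp_all add: algebra_simps)
  ultimately have "s = 0" and "t = 0"
    using assms(3) by simp_all
  then show "u = u'" and "v = v'"
    by (simp_all add: s_def t_def)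
qed

text \<open>For a field with \<open>q\<^sup>3\<close> elements, \<open>x\<^bsup>q\<^sup>2\<^esup> + x\<^sup>q + x\<close> is the trace of \<open>x\<close> over the subfield with
  \<open>q\<close> elements.\<close>

definition trace_kernel :: "nat \<Rightarrow> 'a::field set" where
  "trace_kernel q = {x. x ^ (q ^ 2) + x ^ q + x = 0}"

lemma power_sub_self_in_trace_kernel:
  fixes u :: "'a::field"
  assumes "prime CHAR('a)" and "q = CHAR('a) ^ k" and "u ^ (q ^ 3) = u"
  shows "u ^ q - u \<in> trace_kernel q"
proof -
  have frob: "(a - b) ^ (q ^ j) = a ^ (q ^ j) - b ^ (q ^ j)" for a b :: 'a and j
    by (rule frobenius_diff[OF assms(1), of _ "k * j"]) (simp add: assms(2) power_mult)
  have "(u ^ q - u) ^ (q ^ 2) = u - u ^ (q ^ 2)"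
    using frob[of _ _ 2] assms(3) by (simp flip: power_mult add: power2_eq_square power3_eq_cube mult.assoc)
  moreover have "(u ^ q - u) ^ q = u ^ (q ^ 2) - u ^ q"
    using frob[of _ _ 1] by (simp flip: power_mult add: power2_eq_square)
  ultimately show ?thesis
    by (simp add: trace_kernel_def)
qed

lemma trace_kernel_scale:
  fixes c :: "'a::field"
  assumes "c ^ q = c" and "x \<in> trace_kernel q"
  shows "c * x \<in> trace_kernel q"
proof -
  have "c ^ (q ^ 2) = c"
    using assms(1) by (simp add: power2_eq_square power_mult)
  then have "(c * x) ^ (q ^ 2) + (c * x) ^ q + c * x = c * (x ^ (q ^ 2) + x ^ q + x)"
    using assms(1) by (simp add: algebra_simps)
  then show ?thesis
    using assms(2) by (simp add: trace_kernel_def)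
qed

definition qspan :: "nat \<Rightarrow> 'a::field \<Rightarrow> 'a \<Rightarrow> ('a \<times> 'a) set" where
  "qspan q x y = {(a * x + b * x ^ q, a * y + b * y ^ q) | a b. a ^ q = a \<and> b ^ q = b}"

context
  assumes char2: "CHAR('a::field) = 2"
begin

lemma char2_two_eq_0: "(2::'a) = 0"
  using of_nat_CHAR[where 'a='a] char2 by simp

lemma char2_add_self: "x + x = (0::'a)"
  by (simp add: char2_two_eq_0 flip: mult_2)

lemma char2_uminus: "- x = (x::'a)"
  using char2_add_self by (simp add: neg_eq_iff_add_eq_0)

lemma char2_add_eq_0_iff: "x + y = 0 \<longleftrightarrow> x = (y::'a)"
  by (metis char2_uminus eq_neg_iff_add_eq_0)

lemma char2_diff: "x - y = x + (y::'a)"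
  by (metis char2_uminus diff_conv_add_uminus)

lemma char2_add_swap:
  assumes "x + y = z + (w::'a)"
  shows "x + z = y + w"
proof -
  have "(x + y) + (z + w) = 0"
    using assms by (simp add: char2_add_self)
  then have "x + z = (x + z) + ((x + y) + (z + w))"
    by simp
  also have "\<dots> = y + w + 2 * (x + z)"
    by (simp add: algebra_simps)
  finally show ?thesis
    by (simp add: char2_two_eq_0)
qed

lemma char2_add_power: "(x + y) ^ (2 ^ n) = x ^ (2 ^ n) + (y::'a) ^ (2 ^ n)"
  using freshmans_dream'[of "2 ^ n" n x y] char2 by simp

lemma char2_power2_inj:
  assumes "x ^ 2 = (y::'a) ^ 2"
  shows "x = y"
proof -
  have "(x + y) ^ 2 = 0"
    using char2_add_power[of x y 1] assms by (simp add: char2_add_self)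
  then show ?thesis
    by (simp add: char2_add_eq_0_iff)
qed

lemma char2_power_Suc_inj:
  fixes u w :: 'a
  assumes "odd m" and frob_id: "\<And>z::'a. z ^ (2 ^ (l * m)) = z"
    and "u ^ (2 ^ l + 1) = w ^ (2 ^ l + 1)"
  shows "u = w"
proof (cases "w = 0")
  case False
  define r where "r = u / w"
  have "r * r ^ (2 ^ l) = 1"
    using assms(3) False by (simp add: r_def power_divide)
  then have "r \<noteq> 0" and r_inverse: "r ^ (2 ^ l) = inverse r"
    by (auto intro: inverse_unique[symmetric])
  have "r ^ (2 ^ (l * i)) = (if even i then r else inverse r)" for i
  proof (induction i)
    case (Suc i)
    have "r ^ (2 ^ (l * Suc i)) = (r ^ (2 ^ (l * i))) ^ (2 ^ l)"
      by (simp add: power_add power_mult mult.commute flip: power_mult)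
    then show ?case
      using Suc r_inverse by (simp add: power_inverse)
  qed simp
  from this[of m] have "r = inverse r"
    using frob_id[of r] \<open>odd m\<close> by simp
  then have "r ^ 2 = 1 ^ 2"
    using \<open>r \<noteq> 0\<close> by (metis power2_eq_square power_one right_inverse)
  then have "r = 1"
    by (rule char2_power2_inj)
  then show ?thesis
    using False by (simp add: r_def)
qed (use assms(3) in simp)

lemma char2_trace_kernel_iff: "x \<in> trace_kernel q \<longleftrightarrow> (x::'a) ^ (q ^ 2) = x + x ^ q"
  unfolding trace_kernel_def mem_Collect_eq add.assoc char2_add_eq_0_iff by (simp add: add.commute)

lemma char2_fixed_in_trace_kernel:
  assumes "x ^ q = x" and "(x::'a) \<in> trace_kernel q"
  shows "x = 0"
proof -
  have "x ^ (q ^ 2) = x"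
    using assms(1) by (simp add: power2_eq_square power_mult)
  then show ?thesis
    using assms by (simp add: char2_trace_kernel_iff char2_add_self)
qed

context
  fixes q k :: nat
  assumes q: "q = 2 ^ k"
begin

lemma frobenius_q_add: "(a + b) ^ q = a ^ q + (b::'a) ^ q"
  using char2_add_power q by simp

lemma trace_kernel_add:
  assumes "x \<in> trace_kernel q" and "y \<in> trace_kernel q"
  shows "x + (y::'a) \<in> trace_kernel q"
proof -
  have "(x + y) ^ (q ^ 2) = x ^ (q ^ 2) + y ^ (q ^ 2)"
    using char2_add_power[of x y "k * 2"] q by (simp add: power_mult)
  then show ?thesis
    using assms by (simp add: char2_trace_kernel_iff frobenius_q_add algebra_simps)
qed

lemma trace_kernel_power_q_q:
  assumes "(x::'a) \<in> trace_kernel q"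
  shows "(x ^ q) ^ q = x + x ^ q"
  using assms by (simp add: char2_trace_kernel_iff power2_eq_square flip: power_mult)

lemma qspan_add:
  assumes "(u, v) \<in> qspan q x y" and "(u', v') \<in> qspan q x (y::'a)"
  shows "(u + u', v + v') \<in> qspan q x y"
proof -
  obtain a b a' b' where "a ^ q = a" "b ^ q = b" "a' ^ q = a'" "b' ^ q = b'"
    and "u = a * x + b * x ^ q" "v = a * y + b * y ^ q"
    and "u' = a' * x + b' * x ^ q" "v' = a' * y + b' * y ^ q"
    using assms by (auto simp: qspan_def)
  then show ?thesis
    unfolding qspan_def
    by (intro CollectI exI[of _ "a + a'"] exI[of _ "b + b'"]) (simp add: frobenius_q_add algebra_simps)
qed

lemma qspan_scale:
  assumes "c ^ q = c" and "(u, v) \<in> qspan q x (y::'a)"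
  shows "(c * u, c * v) \<in> qspan q x y"
proof -
  obtain a b where "a ^ q = a" "b ^ q = b" "u = a * x + b * x ^ q" "v = a * y + b * y ^ q"
    using assms(2) by (auto simp: qspan_def)
  then show ?thesis
    unfolding qspan_def using assms(1)
    by (intro CollectI exI[of _ "c * a"] exI[of _ "c * b"]) (simp add: algebra_simps)
qed

lemma qspan_frobenius:
  assumes "x \<in> trace_kernel q" and "y \<in> trace_kernel q" and "(u, v) \<in> qspan q x (y::'a)"
  shows "(u ^ q, v ^ q) \<in> qspan q x y"
proof -
  obtain a b where "a ^ q = a" "b ^ q = b" "u = a * x + b * x ^ q" "v = a * y + b * y ^ q"
    using assms(3) by (auto simp: qspan_def)
  then show ?thesis
    unfolding qspan_def using assms(1,2)
    by (intro CollectI exI[of _ b] exI[of _ "a + b"])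
       (simp add: frobenius_q_add trace_kernel_power_q_q algebra_simps)
qed

lemma qspan_power:
  assumes "R = 2 ^ r" and "x \<in> trace_kernel q" and "y \<in> trace_kernel q"
    and "(x ^ R, y ^ R) \<in> qspan q x (y::'a)" and "(u, v) \<in> qspan q x y"
  shows "(u ^ R, v ^ R) \<in> qspan q x y"
proof -
  obtain a b where ab: "a ^ q = a" "b ^ q = b" "u = a * x + b * x ^ q" "v = a * y + b * y ^ q"
    using assms(5) by (auto simp: qspan_def)
  have "(a ^ R) ^ q = a ^ R" "(b ^ R) ^ q = b ^ R"
    using ab(1,2) by (simp_all add: power_swap[of _ R])
  moreover have "((x ^ R) ^ q, (y ^ R) ^ q) \<in> qspan q x y"
    using qspan_frobenius assms(2-4) by blast
  ultimately have "(a ^ R * x ^ R + b ^ R * (x ^ R) ^ q, a ^ R * y ^ R + b ^ R * (y ^ R) ^ q)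
      \<in> qspan q x y"
    using assms(4) by (intro qspan_add qspan_scale)
  moreover have "u ^ R = a ^ R * x ^ R + b ^ R * (x ^ R) ^ q"
    using assms(1) ab(3) by (simp add: char2_add_power power_mult_distrib power_swap[of x q])
  moreover have "v ^ R = a ^ R * y ^ R + b ^ R * (y ^ R) ^ q"
    using assms(1) ab(4) by (simp add: char2_add_power power_mult_distrib power_swap[of y q])
  ultimately show ?thesis
    by simp
qed

lemma qspan_power_iterate:
  assumes "R = 2 ^ r" and "x \<in> trace_kernel q" and "y \<in> trace_kernel q"
    and "(x ^ R, y ^ R) \<in> qspan q x (y::'a)"
  shows "(x ^ (R ^ j), y ^ (R ^ j)) \<in> qspan q x y"
proof (induction j)
  case 0
  have "(1 * x + 0 * x ^ q, 1 * y + 0 * y ^ q) \<in> qspan q x y"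
    unfolding qspan_def using q by fastforce
  then show ?case
    by simp
next
  case (Suc j)
  have "(x ^ (R ^ j)) ^ R = x ^ (R ^ Suc j)" "(y ^ (R ^ j)) ^ R = y ^ (R ^ Suc j)"
    by (simp_all del: power_Suc add: power_Suc2 flip: power_mult)
  then show ?case
    using qspan_power[OF assms(1-4) Suc] by simp
qed


lemma trace_kernel_power_q_Q_q:
  assumes "Q = 2 ^ l" and "(x::'a) \<in> trace_kernel q"
  shows "((x ^ q) ^ Q) ^ q = x ^ Q + (x ^ q) ^ Q"
proof -
  have "((x ^ q) ^ Q) ^ q = ((x ^ q) ^ q) ^ Q"
    by (rule power_swap)
  then show ?thesis
    using assms by (simp add: trace_kernel_power_q_q char2_add_power)
qed

text \<open>With \<open>M\<close> and \<open>M'\<close> as in the proof idea at the top, the entries of \<open>H = M' M\<^sup>T\<close> are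
  \<open>c = x\<^sup>Q x + y\<^sup>Q y\<close> (twice, once in the form \<open>c\<^sup>q\<close>) and the two cross terms below.\<close>

lemma cross_terms_fixed:
  assumes Q: "Q = 2 ^ l" and x: "x \<in> trace_kernel q" and y: "y \<in> trace_kernel q"
    and c: "(x ^ Q * x + y ^ Q * y) ^ q = x ^ Q * x + (y::'a) ^ Q * y"
  shows "(x ^ Q * x ^ q + y ^ Q * y ^ q) ^ q = x ^ Q * x ^ q + y ^ Q * y ^ q"
    and "(x ^ q) ^ Q * x + (y ^ q) ^ Q * y = (x ^ Q * x ^ q + y ^ Q * y ^ q) + (x ^ Q * x + y ^ Q * y)"
proof -
  define c \<beta> \<beta>' where "c = x ^ Q * x + y ^ Q * y"
    and "\<beta> = x ^ Q * x ^ q + y ^ Q * y ^ q" and "\<beta>' = (x ^ q) ^ Q * x + (y ^ q) ^ Q * y"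
  have c_alt: "c = (x ^ q) ^ Q * x ^ q + (y ^ q) ^ Q * y ^ q"
    using c by (simp add: c_def frobenius_q_add power_mult_distrib power_swap[of _ Q q])
  have "c = c ^ q"
    unfolding c_def using c by (rule sym)
  also have "\<dots> = (x ^ Q + (x ^ q) ^ Q) * (x + x ^ q) + (y ^ Q + (y ^ q) ^ Q) * (y + y ^ q)"
    using x y Q
    by (simp add: c_alt frobenius_q_add power_mult_distrib trace_kernel_power_q_q trace_kernel_power_q_Q_q)
  also have "\<dots> = (x ^ Q * x + y ^ Q * y) + ((x ^ q) ^ Q * x ^ q + (y ^ q) ^ Q * y ^ q) + (\<beta> + \<beta>')"
    by (simp add: \<beta>_def \<beta>'_def algebra_simps)
  also have "\<dots> = (c + c) + (\<beta> + \<beta>')"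
    by (simp only: c_def[symmetric] c_alt[symmetric])
  finally have "c = \<beta> + \<beta>'"
    by (simp add: char2_add_self)
  then show \<beta>': "\<beta>' = \<beta> + c"
    by (metis add.commute add.left_commute add_0 char2_add_self)
  have "\<beta> ^ q = (x ^ q) ^ Q * (x + x ^ q) + (y ^ q) ^ Q * (y + y ^ q)"
    using x y
    by (simp add: \<beta>_def frobenius_q_add power_mult_distrib power_swap[of _ Q q] trace_kernel_power_q_q)
  also have "\<dots> = \<beta>' + c"
    by (simp add: \<beta>'_def c_alt algebra_simps)
  finally show "\<beta> ^ q = \<beta>"
    using \<beta>' by (simp add: char2_add_self add.assoc)
qed

lemma cross_terms_det:
  assumes Q: "Q = 2 ^ l" and c: "(x ^ Q * x + y ^ Q * y) ^ q = x ^ Q * x + (y::'a) ^ Q * y"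
  shows "(x ^ Q * x + y ^ Q * y) * (x ^ Q * x + y ^ Q * y)
      + (x ^ Q * x ^ q + y ^ Q * y ^ q) * ((x ^ q) ^ Q * x + (y ^ q) ^ Q * y)
      = (x * y ^ q + x ^ q * y) ^ Q * (x * y ^ q + x ^ q * y)"
proof -
  define X Y X1 Y1 where "X = x ^ Q" and "Y = y ^ Q" and "X1 = (x ^ q) ^ Q" and "Y1 = (y ^ q) ^ Q"
  have c_alt: "X * x + Y * y = X1 * x ^ q + Y1 * y ^ q"
    using c by (simp add: X_def Y_def X1_def Y1_def frobenius_q_add power_mult_distrib power_swap[of _ Q q])
  have "(X * x + Y * y) * (X1 * x ^ q + Y1 * y ^ q) + (X * x ^ q + Y * y ^ q) * (X1 * x + Y1 * y)
      = (X * Y1 + X1 * Y) * (x * y ^ q + x ^ q * y) + 2 * (X * X1 * x * x ^ q + Y * Y1 * y * y ^ q)"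
    by (simp add: algebra_simps)
  moreover have "(x * y ^ q + x ^ q * y) ^ Q = X * Y1 + X1 * Y"
    using Q by (simp add: X_def Y_def X1_def Y1_def char2_add_power power_mult_distrib)
  ultimately show ?thesis
    unfolding X_def[symmetric] Y_def[symmetric] X1_def[symmetric] Y1_def[symmetric]
    by (subst (2) c_alt) (simp add: char2_two_eq_0)
qed

lemma exists_fixed_solution_2x2:
  assumes "c * c + \<beta> * \<beta>' \<noteq> 0"
    and "c ^ q = c" and "\<beta> ^ q = \<beta>" and "\<beta>' ^ q = \<beta>'" and "u ^ q = u" and "v ^ q = (v::'a)"
  shows "\<exists>a b. a ^ q = a \<and> b ^ q = b \<and> a * c + b * \<beta> = u \<and> a * \<beta>' + b * c = v"
proof -
  define \<Delta> where "\<Delta> = c * c + \<beta> * \<beta>'"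
  have \<Delta>_nz: "\<Delta> \<noteq> 0"
    using assms(1) by (simp add: \<Delta>_def)
  define a b where "a = (u * c + \<beta> * v) / \<Delta>" and "b = (c * v + \<beta>' * u) / \<Delta>"
  have "a ^ q = a" and "b ^ q = b"
    using assms(2-6)
    by (simp_all add: a_def b_def \<Delta>_def power_divide frobenius_q_add power_mult_distrib)
  have a\<Delta>: "a * \<Delta> = u * c + \<beta> * v" and b\<Delta>: "b * \<Delta> = c * v + \<beta>' * u"
    using \<Delta>_nz by (simp_all add: a_def b_def)
  have "(a * c + b * \<beta>) * \<Delta> = (a * \<Delta>) * c + (b * \<Delta>) * \<beta>"
    by (simp add: algebra_simps)
  also have "\<dots> = u * \<Delta> + 2 * (\<beta> * c * v)"
    unfolding a\<Delta> b\<Delta> by (simp add: \<Delta>_def algebra_simps)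
  finally have "a * c + b * \<beta> = u"
    using \<Delta>_nz by (simp add: char2_two_eq_0)
  have "(a * \<beta>' + b * c) * \<Delta> = (a * \<Delta>) * \<beta>' + (b * \<Delta>) * c"
    by (simp add: algebra_simps)
  also have "\<dots> = v * \<Delta> + 2 * (u * c * \<beta>')"
    unfolding a\<Delta> b\<Delta> by (simp add: \<Delta>_def algebra_simps)
  finally have "a * \<beta>' + b * c = v"
    using \<Delta>_nz by (simp add: char2_two_eq_0)
  with \<open>a ^ q = a\<close> \<open>b ^ q = b\<close> \<open>a * c + b * \<beta> = u\<close> show ?thesis
    by blast
qed

text \<open>From \<open>M' = H M\<^sup>-\<^sup>T\<close> one gets \<open>M'' = H' H\<^sup>-\<^sup>T M\<close> for the entrywise \<open>Q\<^sup>2\<close>-th power \<open>M''\<close>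
  (with \<open>H'\<close> the entrywise \<open>Q\<close>-th power of \<open>H\<close>); the first row of \<open>H' H\<^sup>-\<^sup>T\<close> is the solution
  \<open>(a, b)\<close> of the system \<open>(a, b) H = (c\<^sup>Q, \<beta>\<^sup>Q)\<close>.\<close>

lemma power_Q_square_in_qspan:
  assumes Q: "Q = 2 ^ l" and x: "x \<in> trace_kernel q" and y: "y \<in> trace_kernel q"
    and D: "x * y ^ q + x ^ q * y \<noteq> 0"
    and c: "(x ^ Q * x + y ^ Q * y) ^ q = x ^ Q * x + (y::'a) ^ Q * y"
  shows "(x ^ (Q ^ 2), y ^ (Q ^ 2)) \<in> qspan q x y"
proof -
  define X Y X1 Y1 where "X = x ^ Q" and "Y = y ^ Q" and "X1 = (x ^ q) ^ Q" and "Y1 = (y ^ q) ^ Q"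
  define c \<beta> \<beta>' where "c = X * x + Y * y" and "\<beta> = X * x ^ q + Y * y ^ q"
    and "\<beta>' = X1 * x + Y1 * y"
  have c_fixed: "c ^ q = c" and \<beta>_fixed: "\<beta> ^ q = \<beta>" and "\<beta>' = \<beta> + c"
    using c cross_terms_fixed[OF Q x y c]
    by (simp_all add: X_def Y_def X1_def Y1_def c_def \<beta>_def \<beta>'_def)
  then have \<beta>'_fixed: "\<beta>' ^ q = \<beta>'"
    by (simp add: frobenius_q_add)
  have c_alt: "c = X1 * x ^ q + Y1 * y ^ q"
    using c_fixed
    by (simp add: c_def X_def Y_def X1_def Y1_def frobenius_q_add power_mult_distrib power_swap[of _ Q q])
  have Q_add: "(u + v) ^ Q = u ^ Q + v ^ Q" for u v :: 'a
    using Q char2_add_power by simp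
  have det_Q: "X * Y1 + X1 * Y = (x * y ^ q + x ^ q * y) ^ Q"
    by (simp add: X_def Y_def X1_def Y1_def Q_add power_mult_distrib)
  have "c * c + \<beta> * \<beta>' \<noteq> 0"
    using cross_terms_det[OF Q c] D by (simp add: c_def \<beta>_def \<beta>'_def X_def Y_def X1_def Y1_def)
  moreover have Q_fixed: "(z ^ Q) ^ q = z ^ Q" if "z ^ q = z" for z :: 'a
    by (metis power_swap that)
  ultimately obtain a b where "a ^ q = a" "b ^ q = b" and ab_c: "a * c + b * \<beta> = c ^ Q"
    and ab_\<beta>: "a * \<beta>' + b * c = \<beta> ^ Q"
    using exists_fixed_solution_2x2[OF _ c_fixed \<beta>_fixed \<beta>'_fixed]
      Q_fixed[OF c_fixed] Q_fixed[OF \<beta>_fixed] by blast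
  have "c ^ Q = X ^ Q * x ^ Q + Y ^ Q * y ^ Q" and "\<beta> ^ Q = X ^ Q * X1 + Y ^ Q * Y1"
    by (simp_all add: c_def \<beta>_def X1_def Y1_def Q_add power_mult_distrib)
  then have cQ: "c ^ Q = x ^ (Q ^ 2) * X + y ^ (Q ^ 2) * Y"
    and \<beta>Q: "\<beta> ^ Q = x ^ (Q ^ 2) * X1 + y ^ (Q ^ 2) * Y1"
    by (simp_all add: X_def Y_def power2_eq_square power_mult)
  have "(a * x + b * x ^ q) * X + (a * y + b * y ^ q) * Y = a * c + b * \<beta>"
    by (simp add: c_def \<beta>_def algebra_simps)
  then have eq_X: "x ^ (Q ^ 2) * X + y ^ (Q ^ 2) * Y
      = (a * x + b * x ^ q) * X + (a * y + b * y ^ q) * Y"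
    using ab_c cQ by simp
  have "(a * x + b * x ^ q) * X1 + (a * y + b * y ^ q) * Y1 = a * \<beta>' + b * c"
    by (simp add: \<beta>'_def c_alt algebra_simps)
  then have eq_X1: "x ^ (Q ^ 2) * X1 + y ^ (Q ^ 2) * Y1
      = (a * x + b * x ^ q) * X1 + (a * y + b * y ^ q) * Y1"
    using ab_\<beta> \<beta>Q by simp
  have "X * Y1 - Y * X1 \<noteq> 0"
    using D det_Q by (simp add: char2_diff mult.commute)
  from linear_2x2_inj[OF eq_X eq_X1 this] show ?thesis
    unfolding qspan_def using \<open>a ^ q = a\<close> \<open>b ^ q = b\<close>
    by (intro CollectI exI[of _ a] exI[of _ b]) simp
qed

lemma square_sum_fixed_if_power_Q_in_qspan:
  assumes Q: "Q = 2 ^ l" and x: "x \<in> trace_kernel q" and y: "y \<in> trace_kernel q"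
    and D: "x * y ^ q + x ^ q * y \<noteq> 0"
    and c: "(x ^ Q * x + y ^ Q * y) ^ q = x ^ Q * x + (y::'a) ^ Q * y"
    and span: "(x ^ Q, y ^ Q) \<in> qspan q x y"
  shows "(x * x + y * y) ^ q = x * x + y * y"
proof -
  obtain a b where a: "a ^ q = a" and b: "b ^ q = b"
    and xQ: "x ^ Q = a * x + b * x ^ q" and yQ: "y ^ Q = a * y + b * y ^ q"
    using span by (auto simp: qspan_def)
  have xqQ: "(x ^ q) ^ Q = a * x ^ q + b * (x + x ^ q)" and yqQ: "(y ^ q) ^ Q = a * y ^ q + b * (y + y ^ q)"
    using x y a b by (simp_all add: power_swap[of _ q Q] xQ yQ frobenius_q_add power_mult_distrib
        trace_kernel_power_q_q)
  have Q_add: "(u + v) ^ Q = u ^ Q + v ^ Q" for u v :: 'a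
    using Q char2_add_power by simp
  define s t where "s = x * x + y * y" and "t = x * x ^ q + y * y ^ q"
  define c \<beta>' where "c = x ^ Q * x + y ^ Q * y" and "\<beta>' = (x ^ q) ^ Q * x + (y ^ q) ^ Q * y"
  have "\<beta>' ^ q = \<beta>'"
    using cross_terms_fixed[OF Q x y c] c by (simp add: \<beta>'_def frobenius_q_add)
  define \<Delta> where "\<Delta> = a * a + a * b + b * b"
  have "(x * y ^ q + x ^ q * y) ^ Q
      = \<Delta> * (x * y ^ q + x ^ q * y) + 2 * (a * b * x * y + b * (a + b) * x ^ q * y ^ q)"
    by (simp add: Q_add xQ yQ xqQ yqQ \<Delta>_def algebra_simps)
  then have "\<Delta> \<noteq> 0"
    using D by (auto simp: char2_two_eq_0)
  have "\<Delta> * s + 2 * (b * (a + b) * t) = (a + b) * c + b * \<beta>'"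
    by (simp add: c_def \<beta>'_def xQ yQ xqQ yqQ s_def t_def \<Delta>_def algebra_simps)
  then have "s = ((a + b) * c + b * \<beta>') / \<Delta>"
    using \<open>\<Delta> \<noteq> 0\<close> by (simp add: char2_two_eq_0 field_simps)
  then show ?thesis
    using a b c \<open>\<beta>' ^ q = \<beta>'\<close>
    by (simp add: s_def[symmetric] c_def \<Delta>_def power_divide frobenius_q_add power_mult_distrib)
qed

lemma eq_if_power_Q_in_qspan:
  assumes Q: "Q = 2 ^ l" and x: "x \<in> trace_kernel q" and y: "y \<in> trace_kernel q"
    and D: "x * y ^ q + x ^ q * y \<noteq> 0"
    and c: "(x ^ Q * x + y ^ Q * y) ^ q = x ^ Q * x + (y::'a) ^ Q * y"
    and span: "(x ^ Q, y ^ Q) \<in> qspan q x y"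
  shows "x = y"
proof -
  have "x * x + y * y = (x + y) ^ 2"
    by (simp add: power2_eq_square algebra_simps char2_two_eq_0)
  then have "((x + y) ^ q) ^ 2 = (x + y) ^ 2"
    using square_sum_fixed_if_power_Q_in_qspan[OF assms] by (simp add: power_swap[of _ 2 q])
  then have "(x + y) ^ q = x + y"
    by (rule char2_power2_inj)
  then have "x + y = 0"
    using char2_fixed_in_trace_kernel trace_kernel_add[OF x y] by blast
  then show ?thesis
    by (simp add: char2_add_eq_0_iff)
qed

lemma eq_if_linearly_dependent:
  assumes Q: "Q = 2 ^ l" and "odd m" and frob_id: "\<And>z::'a. z ^ (2 ^ (l * m)) = z"
    and x: "x \<in> trace_kernel q" and "x \<noteq> 0" and D: "x * y ^ q + x ^ q * y = 0"
    and c: "(x ^ Q * x + y ^ Q * y) ^ q = x ^ Q * x + (y::'a) ^ Q * y"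
  shows "x = y"
proof -
  have power_Suc_inj: "u ^ (Q + 1) = w ^ (Q + 1) \<Longrightarrow> u = w" for u w :: 'a
    using char2_power_Suc_inj[OF \<open>odd m\<close> frob_id] Q by blast
  define r where "r = y / x"
  have y_eq: "y = r * x"
    using \<open>x \<noteq> 0\<close> by (simp add: r_def)
  have "r ^ q = r"
    using D \<open>x \<noteq> 0\<close> by (simp add: r_def char2_add_eq_0_iff field_simps)
  have c_eq: "x ^ Q * x + y ^ Q * y = (1 + r ^ (Q + 1)) * x ^ (Q + 1)"
    by (simp add: y_eq algebra_simps)
  show ?thesis
  proof (cases "r ^ (Q + 1) = 1")
    case True
    then have "r = 1"
      using power_Suc_inj[of r 1] by simp
    then show ?thesis
      by (simp add: y_eq)
  next
    case False
    define \<sigma> where "\<sigma> = 1 + r ^ (Q + 1)"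
    have "\<sigma> \<noteq> 0"
      using False by (auto simp: \<sigma>_def char2_add_eq_0_iff)
    have "(r ^ (Q + 1)) ^ q = r ^ (Q + 1)"
      using \<open>r ^ q = r\<close> by (metis power_swap)
    then have "\<sigma> ^ q = \<sigma>"
      by (simp add: \<sigma>_def frobenius_q_add)
    then have "(\<sigma> * x ^ (Q + 1)) ^ q = \<sigma> * (x ^ q) ^ (Q + 1)"
      by (metis power_mult_distrib power_swap)
    moreover have "(\<sigma> * x ^ (Q + 1)) ^ q = \<sigma> * x ^ (Q + 1)"
      using c unfolding c_eq \<sigma>_def[symmetric] .
    ultimately have "(x ^ q) ^ (Q + 1) = x ^ (Q + 1)"
      using \<open>\<sigma> \<noteq> 0\<close> by simp
    then have "x ^ q = x"
      by (rule power_Suc_inj)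
    then show ?thesis
      using char2_fixed_in_trace_kernel x \<open>x \<noteq> 0\<close> by blast
  qed
qed

lemma trace_kernel_eq_if_power_sum_fixed:
  assumes Q: "Q = 2 ^ l" and m: "odd m" and frob_id: "\<And>z::'a. z ^ (2 ^ (l * m)) = z"
    and x: "x \<in> trace_kernel q" and y: "y \<in> trace_kernel q"
    and fixed: "(x ^ (Q + 1) + y ^ (Q + 1)) ^ q = x ^ (Q + 1) + (y::'a) ^ (Q + 1)"
  shows "x = y"
proof -
  have "z ^ (Q + 1) = z ^ Q * z" for z :: 'a
    by (metis Suc_eq_plus1 power_Suc2)
  then have c: "(x ^ Q * x + y ^ Q * y) ^ q = x ^ Q * x + y ^ Q * y"
    using fixed by (simp only:)
  txt \<open>In characteristic \<open>2\<close>, \<open>x y\<^sup>q + x\<^sup>q y\<close> is the determinant of the matrix with rows \<open>(x, y)\<close>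
    and \<open>(x\<^sup>q, y\<^sup>q)\<close>; it vanishes iff \<open>x\<close> and \<open>y\<close> are linearly dependent over the fixed field of
    \<open>z \<mapsto> z\<^sup>q\<close>.\<close>
  show ?thesis
  proof (cases "x * y ^ q + x ^ q * y = 0")
    case True
    have "x \<noteq> 0 \<Longrightarrow> x = y"
      using eq_if_linearly_dependent[OF Q m frob_id x _ True c] .
    moreover have "y \<noteq> 0 \<Longrightarrow> y = x"
    proof -
      have "y * x ^ q + y ^ q * x = 0" and "(y ^ Q * y + x ^ Q * x) ^ q = y ^ Q * y + x ^ Q * x"
        using True c by (simp_all add: algebra_simps)
      then show "y \<noteq> 0 \<Longrightarrow> y = x"
        using eq_if_linearly_dependent[OF Q m frob_id y] by blast
    qed
    ultimately show ?thesis
      by blast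
  next
    case False
    obtain i where "m = 2 * i + 1"
      using m oddE by blast
    then have "(Q ^ 2) ^ (i + 1) = 2 ^ (l * m) * Q"
      by (simp add: Q algebra_simps flip: power_mult power_add)
    then have Q_square_power: "z ^ ((Q ^ 2) ^ (i + 1)) = z ^ Q" for z :: 'a
      by (simp only: power_mult[of z] frob_id)
    have "Q ^ 2 = 2 ^ (2 * l)"
      using Q by (metis mult.commute power_mult)
    then have "(x ^ ((Q ^ 2) ^ (i + 1)), y ^ ((Q ^ 2) ^ (i + 1))) \<in> qspan q x y"
      by (rule qspan_power_iterate[OF _ x y power_Q_square_in_qspan[OF Q x y False c]])
    then have "(x ^ Q, y ^ Q) \<in> qspan q x y"
      by (simp only: Q_square_power)
    then show ?thesis
      by (rule eq_if_power_Q_in_qspan[OF Q x y False c])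
  qed
qed

lemma inj_on_trace_kernel_char2:
  assumes Q: "Q = 2 ^ l" and m: "odd m" and frob_id: "\<And>z::'a. z ^ (2 ^ (l * m)) = z"
  shows "inj_on (\<lambda>x::'a. x ^ (q * (Q + 1)) - x ^ (Q + 1)) (trace_kernel q)"
proof (rule inj_onI)
  fix x y :: 'a
  assume x: "x \<in> trace_kernel q" and y: "y \<in> trace_kernel q"
    and eq: "x ^ (q * (Q + 1)) - x ^ (Q + 1) = y ^ (q * (Q + 1)) - y ^ (Q + 1)"
  have "z ^ (q * (Q + 1)) - z ^ (Q + 1) = (z ^ (Q + 1)) ^ q + z ^ (Q + 1)" for z :: 'a
    by (metis char2_diff mult.commute power_mult)
  then have "(x ^ (Q + 1)) ^ q + x ^ (Q + 1) = (y ^ (Q + 1)) ^ q + y ^ (Q + 1)"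
    using eq by (simp only:)
  then have "(x ^ (Q + 1) + y ^ (Q + 1)) ^ q = x ^ (Q + 1) + y ^ (Q + 1)"
    unfolding frobenius_q_add by (rule char2_add_swap)
  then show "x = y"
    by (rule trace_kernel_eq_if_power_sum_fixed[OF Q m frob_id x y])
qed

end

end

lemma dvd_power_sub_one: "x - 1 dvd x ^ n - (1::int)"
proof -
  have "[x = 1] (mod x - 1)"
    by (simp add: cong_iff_dvd_diff)
  then have "[x ^ n = 1 ^ n] (mod x - 1)"
    by (rule cong_pow)
  then show ?thesis
    by (simp add: cong_iff_dvd_diff)
qed

lemma dvd_odd_power_add_one:
  assumes "odd n"
  shows "x + 1 dvd x ^ n + (1::int)"
proof -
  have "[x = -1] (mod x + 1)"
    by (simp add: cong_iff_dvd_diff)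
  then have "[x ^ n = (-1) ^ n] (mod x + 1)"
    by (rule cong_pow)
  then show ?thesis
    using assms by (simp add: cong_iff_dvd_diff)
qed

lemma exists_power2_times_odd:
  assumes "n \<noteq> 0"
  obtains f b where "n = 2 ^ f * b" and "odd (b::nat)"
proof -
  have "\<not> is_unit (2::nat)"
    by simp
  from multiplicity_decompose'[OF assms this] obtain b where "n = 2 ^ multiplicity 2 n * b" "odd b"
    by blast
  then show ?thesis
    by (rule that)
qed

lemma ord2_le_iff_dvd:
  assumes "k = 2 ^ e * a" and "odd a"
  shows "ord2 (int k) \<le> ord2 (int l) \<longleftrightarrow> 2 ^ e dvd l"
proof -
  have "multiplicity 2 (int k) = e"
    using assms by (intro multiplicity_decomposeI[of _ _ _ "int a"]) simp_all
  moreover have "k \<noteq> 0"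
    using assms by (simp add: odd_pos)
  ultimately have ord2_k: "ord2 (int k) = enat e"
    by (simp add: ord2_def)
  show ?thesis
  proof (cases "l = 0")
    case False
    have "(2::int) ^ e dvd int l \<longleftrightarrow> e \<le> multiplicity 2 (int l)"
      using False by (intro power_dvd_iff_le_multiplicity) simp_all
    moreover have "(2::int) ^ e dvd int l \<longleftrightarrow> 2 ^ e dvd l"
      using int_dvd_int_iff[of "2 ^ e" l] by simp
    moreover have "ord2 (int l) = enat (multiplicity 2 (int l))"
      using False by (simp add: ord2_def)
    ultimately show ?thesis
      using ord2_k by simp
  qed (simp add: ord2_def)
qed

lemma gcd_two_power_sub_one_two_power_add_one:
  fixes a b e :: nat
  assumes "odd a"
  shows "gcd (2 ^ (2 ^ e * a) - 1) (2 ^ (2 ^ e * b) + 1) = (1::nat)"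
proof -
  define g where "g = gcd (2 ^ (2 ^ e * a) - 1) (2 ^ (2 ^ e * b) + 1 :: nat)"
  define Z :: int where "Z = 2 ^ 2 ^ e"
  have "int g = gcd (int (2 ^ (2 ^ e * a) - 1)) (int (2 ^ (2 ^ e * b) + 1))"
    by (simp only: g_def gcd_int_int_eq)
  then have int_g: "int g = gcd (Z ^ a - 1) (Z ^ b + 1)"
    by (simp add: Z_def add.commute power_mult)
  have "[Z ^ a = 1] (mod int g)" and "[Z ^ b = -1] (mod int g)"
    by (simp_all add: int_g cong_iff_dvd_diff)
  then have "[(Z ^ a) ^ b = 1 ^ b] (mod int g)" and "[(Z ^ b) ^ a = (-1) ^ a] (mod int g)"
    by (simp_all only: cong_pow)
  then have "[Z ^ (a * b) = 1] (mod int g)" and "[Z ^ (a * b) = -1] (mod int g)"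
    using assms by (simp_all add: mult.commute flip: power_mult)
  then have "[1 = -1] (mod int g)"
    by (meson cong_sym cong_trans)
  then have "int g dvd 2"
    by (simp add: cong_iff_dvd_diff)
  then have "g dvd 2"
    using int_dvd_int_iff[of g 2] by simp
  then have "g \<le> 2"
    by (rule dvd_imp_le) simp
  moreover have "odd g"
  proof -
    have "odd (2 ^ (2 ^ e * a) - 1 :: nat)"
      using assms by (simp add: odd_pos)
    moreover have "g dvd 2 ^ (2 ^ e * a) - 1"
      by (simp add: g_def)
    ultimately show ?thesis
      by (metis dvd_trans)
  qed
  ultimately show ?thesis
    unfolding g_def[symmetric] by presburger
qed

text \<open>If \<open>2\<^sup>e\<close> does not divide \<open>l = 2\<^sup>f b\<close> with \<open>b\<close> odd, then \<open>2\<^bsup>2\<^sup>f\<^esup> + 1\<close> divides both numbers.\<close>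

lemma gcd_two_power_sub_one_two_power_add_one_ne_1:
  fixes a e l :: nat
  assumes "\<not> 2 ^ e dvd l"
  shows "gcd (2 ^ (2 ^ e * a) - 1) (2 ^ l + 1) \<noteq> (1::nat)"
proof
  assume gcd: "gcd (2 ^ (2 ^ e * a) - 1) (2 ^ l + 1) = (1::nat)"
  have "l \<noteq> 0"
    using assms by (metis dvd_0_right)
  then obtain f b where l: "l = 2 ^ f * b" and "odd b"
    by (rule exists_power2_times_odd)
  have "f < e"
  proof (rule ccontr)
    assume "\<not> f < e"
    then have "2 ^ e dvd l"
      using l by (simp add: le_imp_power_dvd)
    with assms show False
      by contradiction
  qed
  then have k: "2 ^ e * a = 2 ^ f * 2 * (2 ^ (e - f - 1) * a)"
    by (simp flip: power_Suc power_add)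
  define Z :: int where "Z = 2 ^ 2 ^ f"
  have "Z + 1 dvd Z ^ b + 1"
    using \<open>odd b\<close> by (rule dvd_odd_power_add_one)
  then have "Z + 1 dvd int (2 ^ l + 1)"
    by (simp add: Z_def l power_mult add.commute)
  moreover have "Z + 1 dvd Z ^ 2 - 1"
    by (simp add: power2_eq_square square_diff_one_factored)
  then have "Z + 1 dvd (Z ^ 2) ^ (2 ^ (e - f - 1) * a) - 1"
    using dvd_power_sub_one by (rule dvd_trans)
  then have "Z + 1 dvd int (2 ^ (2 ^ e * a) - 1)"
    by (simp add: Z_def k power_mult)
  ultimately have "Z + 1 dvd gcd (int (2 ^ (2 ^ e * a) - 1)) (int (2 ^ l + 1))"
    by (simp only: gcd_greatest)
  then have "Z + 1 dvd 1"
    by (simp only: gcd_int_int_eq gcd of_nat_1)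
  moreover have "Z + 1 > 1"
    by (simp add: Z_def)
  ultimately show False
    using zdvd_not_zless[of 1 "Z + 1"] by simp
qed

lemma gcd_pow_sub_one_pow_add_one_eq_1_iff:
  fixes p k l :: nat
  assumes p: "prime p" and k: "k = 2 ^ e * a" and "odd a"
  shows "gcd (p ^ k - 1) (p ^ l + 1) = 1 \<longleftrightarrow> p = 2 \<and> 2 ^ e dvd l"
proof (cases "p = 2")
  case True
  show ?thesis
  proof (cases "2 ^ e dvd l")
    case True
    then obtain b where "l = 2 ^ e * b"
      by blast
    then show ?thesis
      using gcd_two_power_sub_one_two_power_add_one[OF \<open>odd a\<close>] \<open>p = 2\<close> True by (simp add: k)
  qed (use gcd_two_power_sub_one_two_power_add_one_ne_1 \<open>p = 2\<close> k in simp)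
next
  case False
  then have "p > 2"
    using prime_ge_2_nat[OF p] by simp
  then have "odd p"
    by (rule prime_odd_nat[OF p])
  then have "2 dvd gcd (p ^ k - 1) (p ^ l + 1)"
    by simp
  then have "gcd (p ^ k - 1) (p ^ l + 1) \<noteq> 1"
    using odd_one by metis
  with False show ?thesis
    by simp
qed

lemma inj_on_trace_kernel_two_power:
  fixes k l e a b :: nat
  assumes card: "CARD('a::{field,finite}) = 2 ^ (3 * k)" and k: "k = 2 ^ e * a" and "odd a"
    and l: "l = 2 ^ e * b"
  shows "inj_on (\<lambda>x::'a. x ^ (2 ^ k * (2 ^ l + 1)) - x ^ (2 ^ l + 1)) (trace_kernel (2 ^ k))"
proof -
  have "l * (3 * a) = 3 * k * b"
    by (simp add: k l algebra_simps)
  then have "2 ^ (l * (3 * a)) = CARD('a) ^ b"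
    unfolding card by (simp only: power_mult)
  then have "z ^ (2 ^ (l * (3 * a))) = z" for z :: 'a
    by (simp only: power_card_power_eq_self)
  then show ?thesis
    using CHAR_eq_of_card[OF two_is_prime_nat card] \<open>odd a\<close>
    by (intro inj_on_trace_kernel_char2[where k = k and l = l and m = "3 * a"]) simp_all
qed

lemma power_diff_in_trace_kernel:
  fixes p k q n :: nat
  assumes p: "prime p" and card: "CARD('a::{field,finite}) = p ^ (3 * k)" and q: "q = p ^ k"
  shows "x ^ (q * n) - (x::'a) ^ n \<in> trace_kernel q"
proof -
  have "(x ^ n) ^ (q ^ 3) = x ^ n"
    using power_card_eq_self[of "x ^ n"] by (simp only: card q mult.commute power_mult)
  then have "(x ^ n) ^ q - x ^ n \<in> trace_kernel q"
    using CHAR_eq_of_card[OF p card] p q by (intro power_sub_self_in_trace_kernel[where k = k]) simp_all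
  then show ?thesis
    by (simp only: mult.commute[of q] power_mult)
qed

lemma exists_nonzero_in_trace_kernel:
  fixes p k q :: nat
  assumes p: "prime p" and "k > 0" and card: "CARD('a::{field,finite}) = p ^ (3 * k)"
    and q: "q = p ^ k"
  shows "\<exists>x::'a. x \<noteq> 0 \<and> x \<in> trace_kernel q"
proof -
  have "2 \<le> q"
    using prime_ge_2_nat[OF p] self_le_power[of p k] \<open>k > 0\<close> by (simp add: q)
  moreover have "q ^ 1 < q ^ 3"
    using \<open>2 \<le> q\<close> by (intro power_strict_increasing) simp_all
  ultimately obtain w :: 'a where "w ^ q \<noteq> w"
    using exists_power_ne_self[where 'a = 'a, of q] card q by (auto simp: mult.commute power_mult)
  moreover have "w ^ q - w \<in> trace_kernel q"
    using power_diff_in_trace_kernel[OF p card q, of w 1] by simp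
  ultimately show ?thesis
    by (metis right_minus_eq)
qed

lemma exists_fixed_root_of_unity_ne_one:
  fixes p k q d :: nat
  assumes p: "prime p" and "k > 0" and card: "CARD('a::{field,finite}) = p ^ (3 * k)"
    and q: "q = p ^ k" and "2 \<le> d" and "d dvd q - 1"
  shows "\<exists>\<zeta>::'a. \<zeta> ^ d = 1 \<and> \<zeta> \<noteq> 1 \<and> \<zeta> ^ q = \<zeta>"
proof -
  have "1 \<le> q"
    using prime_gt_0_nat[OF p] by (simp add: q Suc_leI)
  then have "int (q - 1) dvd int (q ^ 3 - 1)"
    using dvd_power_sub_one[of "int q" 3] by simp
  then have "d dvd CARD('a) - 1"
    using \<open>d dvd q - 1\<close> by (simp add: card q mult.commute power_mult dvd_trans)
  then obtain \<zeta> :: 'a where "\<zeta> ^ d = 1" and "\<zeta> \<noteq> 1"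
    using exists_root_of_unity_ne_one \<open>2 \<le> d\<close> by blast
  moreover have "\<zeta> ^ q = \<zeta> ^ (q - 1) * \<zeta>"
    using \<open>1 \<le> q\<close> by (simp flip: power_Suc2)
  moreover have "\<zeta> ^ (q - 1) = 1"
    using \<open>d dvd q - 1\<close> \<open>\<zeta> ^ d = 1\<close> by (auto simp: power_mult)
  ultimately show ?thesis
    by auto
qed

lemma not_inj_on_trace_kernel:
  fixes p k q Q :: nat
  assumes p: "prime p" and "k > 0" and card: "CARD('a::{field,finite}) = p ^ (3 * k)"
    and q: "q = p ^ k" and gcd: "gcd (q - 1) (Q + 1) \<noteq> 1"
  shows "\<not> inj_on (\<lambda>x::'a. x ^ (q * (Q + 1)) - x ^ (Q + 1)) (trace_kernel q)"
proof
  assume inj: "inj_on (\<lambda>x::'a. x ^ (q * (Q + 1)) - x ^ (Q + 1)) (trace_kernel q)"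
  define d where "d = gcd (q - 1) (Q + 1)"
  have "d \<noteq> 0"
    by (simp add: d_def)
  then have "2 \<le> d"
    using gcd unfolding d_def by presburger
  then obtain \<zeta> :: 'a where "\<zeta> ^ d = 1" and "\<zeta> \<noteq> 1" and \<zeta>_fixed: "\<zeta> ^ q = \<zeta>"
    using exists_fixed_root_of_unity_ne_one[OF p \<open>k > 0\<close> card q] by (auto simp: d_def)
  have "d dvd Q + 1"
    by (simp add: d_def)
  then obtain t where "Q + 1 = d * t"
    by (rule dvdE)
  then have \<zeta>_Q: "\<zeta> ^ (Q + 1) = 1"
    using \<open>\<zeta> ^ d = 1\<close> by (simp add: power_mult)
  obtain x :: 'a where "x \<noteq> 0" and x: "x \<in> trace_kernel q"
    using exists_nonzero_in_trace_kernel[OF p \<open>k > 0\<close> card q] by blast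
  have "(\<zeta> * x) ^ (q * (Q + 1)) = ((\<zeta> ^ (Q + 1)) ^ q) * (x ^ (Q + 1)) ^ q"
    by (simp only: power_mult_distrib mult.commute[of q] power_mult)
  then have "(\<zeta> * x) ^ (q * (Q + 1)) = x ^ (q * (Q + 1))"
    by (simp only: \<zeta>_Q power_one mult_1_left mult.commute[of q] power_mult)
  moreover have "(\<zeta> * x) ^ (Q + 1) = x ^ (Q + 1)"
    by (simp only: \<zeta>_Q power_mult_distrib mult_1_left)
  ultimately have "(\<zeta> * x) ^ (q * (Q + 1)) - (\<zeta> * x) ^ (Q + 1) = x ^ (q * (Q + 1)) - x ^ (Q + 1)"
    by (simp only:)
  then have "\<zeta> * x = x"
    by (rule inj_onD[OF inj _ trace_kernel_scale[OF \<zeta>_fixed x] x])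
  then show False
    using \<open>x \<noteq> 0\<close> \<open>\<zeta> \<noteq> 1\<close> by simp
qed

theorem theorem1p6:
  fixes p k l :: nat
  assumes "prime p" and "k > 0"
    and card: "card (UNIV :: 'a set) = p ^ (3 * k)"
  defines "q \<equiv> p ^ k" and "Q \<equiv> p ^ l"
  defines "\<Gamma> \<equiv> {x :: 'a::{field,finite}. x ^ (q^2) + x ^ q + x = 0}"
  shows "(bij_betw (\<lambda>x. x ^ (q * (Q + 1)) - x ^ (Q + 1)) \<Gamma> \<Gamma>
            \<longleftrightarrow> gcd (q - 1) (Q + 1) = 1)
       \<and> (gcd (q - 1) (Q + 1) = 1 \<longleftrightarrow> (p = 2 \<and> ord2 (int k) \<le> ord2 (int l)))"
proof -
  define f where "f = (\<lambda>x::'a. x ^ (q * (Q + 1)) - x ^ (Q + 1))"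
  have q: "q = p ^ k" and \<Gamma>: "\<Gamma> = trace_kernel q"
    by (simp_all add: q_def \<Gamma>_def trace_kernel_def)
  obtain e a where k: "k = 2 ^ e * a" and "odd a"
    using exists_power2_times_odd \<open>k > 0\<close> by (metis not_gr0)
  have gcd_iff: "gcd (q - 1) (Q + 1) = 1 \<longleftrightarrow> p = 2 \<and> 2 ^ e dvd l"
    unfolding q Q_def by (rule gcd_pow_sub_one_pow_add_one_eq_1_iff[OF \<open>prime p\<close> k \<open>odd a\<close>])
  have "f x \<in> \<Gamma>" for x
    unfolding f_def \<Gamma> by (rule power_diff_in_trace_kernel[OF \<open>prime p\<close> card q])
  then have "f ` \<Gamma> \<subseteq> \<Gamma>"
    by blast
  then have "bij_betw f \<Gamma> \<Gamma> \<longleftrightarrow> inj_on f \<Gamma>"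
    using endo_inj_surj[of \<Gamma> f] by (auto simp: bij_betw_def)
  also have "\<dots> \<longleftrightarrow> gcd (q - 1) (Q + 1) = 1"
  proof
    assume "inj_on f \<Gamma>"
    then show "gcd (q - 1) (Q + 1) = 1"
      using not_inj_on_trace_kernel[OF \<open>prime p\<close> \<open>k > 0\<close> card q] by (auto simp: f_def \<Gamma>)
  next
    assume "gcd (q - 1) (Q + 1) = 1"
    then obtain b where "p = 2" and l: "l = 2 ^ e * b"
      using gcd_iff by auto
    then show "inj_on f \<Gamma>"
      using inj_on_trace_kernel_two_power[OF _ k \<open>odd a\<close> l] card by (simp add: f_def \<Gamma> q Q_def)
  qed
  finally show ?thesis
    using gcd_iff ord2_le_iff_dvd[OF k \<open>odd a\<close>] by (simp add: f_def)
qed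

end
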